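(* Consider a human–algorithm system (as defined in the context) with $A\le H$, and let $s$ be a weighting function for $c$. Write $s_i=s(a_i,h_i)$, $\delta_{ai}=a_i-A$ and $\delta_{hi}=h_i-H$. Then the system exhibits complementarity whenever $$(H-A)\sum_{i=1}^N p_i\,s_i<\sum_{i=1}^N p_i\,s_i\,(\delta_{ai}-\delta_{hi}).$$ Equivalently, viewing $s_i$ and $\delta_{ai}-\delta_{hi}$ as random variables on $\{1,\dots,N\}$ with probability mass $p_i$ at $i$, the condition reads $(H-A)\,\mathbb{E}[s_i]<\mathrm{Cov}\big(s_i,\ \delta_{ai}-\delta_{hi}\big)$.
   Context: A human–algorithm system consists of: an integer $N\ge1$ (number of regimes); probabilities $p_1,\dots,p_N\ge 0$ with $\sum_i p_i=1$; algorithmic losses $a_1,\dots,a_N\ge 0$ and unaided-human losses $h_1,\dots,h_N\ge0$; and a combining function $c:[0,\infty)^2\to\mathbb{R}$ satisfying $\min(a,h)\le c(a,h)\le\max(a,h)$ for all $a,h\ge0$, where $c(a_i,h_i)$ is the loss of the combined system in regime $i$. Write $A=\sum_i p_i a_i$ and $H=\sum_i p_i h_i$. The system exhibits complementarity if $\sum_{i=1}^N p_i\,c(a_i,h_i)<\min(A,H)$. A weighting function for $c$ is a function $s:[0,\infty)^2\to[0,1]$ with $c(a,h)=(1-s(a,h))a+s(a,h)h$ for all $a,h\ge0$. *)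

theory Defs
  imports Complex_Main
begin

text \<open>A human-algorithm system: N regimes indexed 1..N, probabilities p, algorithmic
losses a, unaided-human losses h, combining function c.\<close>

definition valid_combining :: "(real \<Rightarrow> real \<Rightarrow> real) \<Rightarrow> bool" where
  "valid_combining c \<longleftrightarrow> (\<forall>x y. 0 \<le> x \<longrightarrow> 0 \<le> y \<longrightarrow> min x y \<le> c x y \<and> c x y \<le> max x y)"

definition ha_system :: "nat \<Rightarrow> (nat \<Rightarrow> real) \<Rightarrow> (nat \<Rightarrow> real) \<Rightarrow> (nat \<Rightarrow> real)
    \<Rightarrow> (real \<Rightarrow> real \<Rightarrow> real) \<Rightarrow> bool" where
  "ha_system N p a h c \<longleftrightarrow> 1 \<le> N \<and> (\<forall>i\<in>{1..N}. 0 \<le> p i \<and> 0 \<le> a i \<and> 0 \<le> h i)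
     \<and> (\<Sum>i=1..N. p i) = 1 \<and> valid_combining c"

definition complementarity :: "nat \<Rightarrow> (nat \<Rightarrow> real) \<Rightarrow> (nat \<Rightarrow> real) \<Rightarrow> (nat \<Rightarrow> real)
    \<Rightarrow> (real \<Rightarrow> real \<Rightarrow> real) \<Rightarrow> bool" where
  "complementarity N p a h c \<longleftrightarrow>
     (\<Sum>i=1..N. p i * c (a i) (h i)) < min (\<Sum>i=1..N. p i * a i) (\<Sum>i=1..N. p i * h i)"

definition weighting_function :: "(real \<Rightarrow> real \<Rightarrow> real) \<Rightarrow> (real \<Rightarrow> real \<Rightarrow> real) \<Rightarrow> bool" where
  "weighting_function c s \<longleftrightarrow> (\<forall>x y. 0 \<le> x \<longrightarrow> 0 \<le> y \<longrightarrow>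
      0 \<le> s x y \<and> s x y \<le> 1 \<and> c x y = (1 - s x y) * x + s x y * y)"

end

theory Submission
  imports Defs
begin

text \<open>Since \<open>c(a,h) = a - s(a,h) (a - h)\<close>, the expected combined loss is
\<open>A - E[s (a - h)]\<close>. Centering gives \<open>E[s ((a - A) - (h - H))] = E[s (a - h)] + (H - A) E[s]\<close>,
so the hypothesis says exactly that \<open>E[s (a - h)] > 0\<close>, i.e. the combined loss is below
\<open>A = min A H\<close>.\<close>

lemma weighting_function_eq_diff:
  assumes "weighting_function c s" "0 \<le> x" "0 \<le> y"
  shows "c x y = x - s x y * (x - y)"
  using assms unfolding weighting_function_def by (simp add: algebra_simps)

lemma sum_weighted_centered_diff:
  fixes w a h :: "'i \<Rightarrow> real"
  shows "(\<Sum>i\<in>I. w i * ((a i - A) - (h i - H)))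
           = (\<Sum>i\<in>I. w i * (a i - h i)) + (H - A) * (\<Sum>i\<in>I. w i)"
proof -
  have "(\<Sum>i\<in>I. w i * ((a i - A) - (h i - H)))
          = (\<Sum>i\<in>I. w i * (a i - h i) + (H - A) * w i)"
    by (rule sum.cong) (simp_all add: algebra_simps)
  then show ?thesis
    by (simp add: sum.distrib sum_distrib_left)
qed

lemma expected_combined_loss:
  assumes "ha_system N p a h c" "weighting_function c s"
  shows "(\<Sum>i=1..N. p i * c (a i) (h i))
           = (\<Sum>i=1..N. p i * a i) - (\<Sum>i=1..N. p i * s (a i) (h i) * (a i - h i))"
proof -
  have "(\<Sum>i=1..N. p i * c (a i) (h i))
          = (\<Sum>i=1..N. p i * a i - p i * s (a i) (h i) * (a i - h i))"
  proof (rule sum.cong)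
    fix i assume "i \<in> {1..N}"
    then have "0 \<le> a i" "0 \<le> h i"
      using assms(1) unfolding ha_system_def by auto
    then have "c (a i) (h i) = a i - s (a i) (h i) * (a i - h i)"
      by (rule weighting_function_eq_diff[OF assms(2)])
    then show "p i * c (a i) (h i) = p i * a i - p i * s (a i) (h i) * (a i - h i)"
      by (simp only:) (simp add: algebra_simps)
  qed simp
  then show ?thesis
    by (simp add: sum_subtractf)
qed

theorem lemma7:
  fixes N :: nat and p a h :: "nat \<Rightarrow> real" and c s :: "real \<Rightarrow> real \<Rightarrow> real"
  assumes "ha_system N p a h c"
    and "(\<Sum>i=1..N. p i * a i) \<le> (\<Sum>i=1..N. p i * h i)"
    and "weighting_function c s"
    and "let A = (\<Sum>i=1..N. p i * a i); H = (\<Sum>i=1..N. p i * h i) in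
           (H - A) * (\<Sum>i=1..N. p i * s (a i) (h i))
             < (\<Sum>i=1..N. p i * s (a i) (h i) * ((a i - A) - (h i - H)))"
  shows "complementarity N p a h c"
proof -
  define A where "A = (\<Sum>i=1..N. p i * a i)"
  define H where "H = (\<Sum>i=1..N. p i * h i)"
  have "(H - A) * (\<Sum>i=1..N. p i * s (a i) (h i))
          < (\<Sum>i=1..N. p i * s (a i) (h i) * ((a i - A) - (h i - H)))"
    using assms(4) unfolding A_def H_def Let_def .
  then have "0 < (\<Sum>i=1..N. p i * s (a i) (h i) * (a i - h i))"
    using sum_weighted_centered_diff[of "\<lambda>i. p i * s (a i) (h i)"] by simp
  then have "(\<Sum>i=1..N. p i * c (a i) (h i)) < A"
    using expected_combined_loss[OF assms(1,3)] unfolding A_def by simp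
  then show ?thesis
    using assms(2) unfolding complementarity_def A_def H_def by simp
qed

end
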